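(* Let $V$, $u$, $L(V,u)=\mathbb{H}^m(-1)\cap(V+u)\neq\emptyset$, $\xi$, $a$, $\alpha$, $\beta$ be as follows: $V$ a linear hyperplane of $\mathbb{R}^{m,1}$, $u\in\mathbb{R}^{m,1}$, $\xi\in V^\perp$ nonzero with $a=\langle u,\xi\rangle\ge0$, $\langle\xi,\xi\rangle\in\{1,-1,0\}$, $\beta=(\langle\xi,\xi\rangle+a^2)^{-1/2}$, $\alpha=\beta a$. Let $M$ be an $n$-dimensional submanifold of $L(V,u)$, and let $f_1(\cdot,t)$, $F(\cdot,t)$ be the mean curvature flows of $M$ in $L(V,u)$ and in $\mathbb{R}^{m,1}$ respectively. If $\alpha\neq1$, then for $x\in M$, $$F(x,t)=\sqrt{2nt(1-\alpha^2)+1}\,\big(f_1(x,s_\alpha(t))-\eta\big)+\eta,$$ where $\eta=\frac{\alpha\beta}{1-\alpha^2}\xi$ and $s_\alpha(t)=\frac{1}{2n(1-\alpha^2)}\ln\big(2nt(1-\alpha^2)+1\big)$. If $\alpha=1$, then $F(x,t)=f_1(x,t)-nt\beta\xi$. (These hold whenever the right-hand sides are defined.)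
   Context: $\mathbb{R}^{m,1}$ denotes $\mathbb{R}^{m+1}$ with $\langle x,y\rangle=\sum_{i=1}^m x_iy_i-x_{m+1}y_{m+1}$; $\mathbb{H}^m(-1)=\{x:\langle x,x\rangle=-1,\ x_{m+1}>0\}$; $L(V,u)$ carries the induced Riemannian metric. A mean curvature flow of a submanifold $M$ in $X$ is a map $f:M\times I\to X$, $I\ni0$, with $f(\cdot,0)$ the inclusion and $\partial_tf$ the unnormalized mean curvature vector of $f(\cdot,t)$ in $X$. *)

theory Defs
  imports "HOL-Analysis.Analysis"
begin

text \<open>R^{m,1} is modelled as real^'k (so m+1 = CARD('k)) with a distinguished
  timelike coordinate tm :: 'k (the paper's coordinate x_{m+1}).\<close>

definition mink :: "'k::finite \<Rightarrow> real^'k \<Rightarrow> real^'k \<Rightarrow> real" where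
  "mink tm x y = (\<Sum>i\<in>UNIV. x$i * y$i) - 2 * (x$tm * y$tm)"

definition hyp_space :: "'k::finite \<Rightarrow> (real^'k) set" where
  "hyp_space tm = {x. mink tm x x = -1 \<and> x$tm > 0}"

definition Lset :: "'k::finite \<Rightarrow> (real^'k) set \<Rightarrow> real^'k \<Rightarrow> (real^'k) set" where
  "Lset tm V u = hyp_space tm \<inter> {v + u | v. v \<in> V}"

fun Ck :: "nat \<Rightarrow> ('a::euclidean_space \<Rightarrow> 'b::real_normed_vector) \<Rightarrow> 'a set \<Rightarrow> bool" where
  "Ck 0 f U = continuous_on U f"
| "Ck (Suc k) f U = ((\<forall>x\<in>U. f differentiable (at x)) \<and>
      (\<forall>i\<in>Basis. Ck k (\<lambda>x. frechet_derivative f (at x) i) U))"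

definition smooth_on :: "('a::euclidean_space \<Rightarrow> 'b::real_normed_vector) \<Rightarrow> 'a set \<Rightarrow> bool" where
  "smooth_on f U = (\<forall>k. Ck k f U)"

definition chart :: "(real^'k::finite) set \<Rightarrow> (real^'n::finite) set \<Rightarrow> (real^'n \<Rightarrow> real^'k) \<Rightarrow> bool" where
  "chart M U \<phi> = (open U \<and> smooth_on \<phi> U \<and> (\<exists>W. open W \<and> \<phi> ` U = M \<inter> W) \<and> inj_on \<phi> U
      \<and> continuous_on (\<phi> ` U) (inv_into U \<phi>)
      \<and> (\<forall>u\<in>U. inj (frechet_derivative \<phi> (at u))))"

definition submanifold :: "'n::finite itself \<Rightarrow> (real^'k::finite) set \<Rightarrow> bool" where
  "submanifold _ M = (\<forall>p\<in>M. \<exists>U (\<phi>::real^'n \<Rightarrow> real^'k). chart M U \<phi> \<and> p \<in> \<phi> ` U)"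

definition tangent_space :: "(real^'k::finite) set \<Rightarrow> real^'k \<Rightarrow> (real^'k) set" where
  "tangent_space N p = {v. \<exists>\<gamma> e. e > 0 \<and> (\<forall>s\<in>{-e<..<e}. \<gamma> s \<in> N) \<and> \<gamma> 0 = p
       \<and> (\<gamma> has_vector_derivative v) (at 0)}"

definition normal_space :: "'k::finite \<Rightarrow> (real^'k) set \<Rightarrow> real^'k \<Rightarrow> ('n::finite \<Rightarrow> real^'k) \<Rightarrow> (real^'k) set" where
  "normal_space tm N p D = tangent_space N p \<inter> {w. \<forall>i. mink tm w (D i) = 0}"

definition nproj :: "'k::finite \<Rightarrow> (real^'k) set \<Rightarrow> real^'k \<Rightarrow> ('n::finite \<Rightarrow> real^'k) \<Rightarrow> real^'k \<Rightarrow> real^'k" where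
  "nproj tm N p D v = (THE w. w \<in> normal_space tm N p D \<and>
      (\<forall>z\<in>normal_space tm N p D. mink tm (v - w) z = 0))"

definition pd :: "(real^'n::finite \<Rightarrow> real^'k::finite) \<Rightarrow> 'n \<Rightarrow> real^'n \<Rightarrow> real^'k" where
  "pd X i u = vector_derivative (\<lambda>r. X (u + r *\<^sub>R axis i 1)) (at 0)"

definition gram :: "'k::finite \<Rightarrow> (real^'n::finite \<Rightarrow> real^'k) \<Rightarrow> real^'n \<Rightarrow> real^'n^'n" where
  "gram tm X u = (\<chi> i j. mink tm (pd X i u) (pd X j u))"

text \<open>Unnormalized mean curvature vector (trace of the second fundamental form)
  at X u of the immersion X into the ambient N.\<close>
definition mean_curv :: "'k::finite \<Rightarrow> (real^'k) set \<Rightarrow> (real^'n::finite \<Rightarrow> real^'k) \<Rightarrow> real^'n \<Rightarrow> real^'k" where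
  "mean_curv tm N X u = (\<Sum>i\<in>UNIV. \<Sum>j\<in>UNIV. (matrix_inv (gram tm X u))$i$j *\<^sub>R
       nproj tm N (X u) (\<lambda>l. pd X l u) (pd (pd X j) i u))"

definition mcf :: "'n::finite itself \<Rightarrow> 'k::finite \<Rightarrow> (real^'k) set \<Rightarrow> (real^'k) set \<Rightarrow> real set
      \<Rightarrow> (real^'k \<Rightarrow> real \<Rightarrow> real^'k) \<Rightarrow> bool" where
  "mcf _ tm N M I f = (is_interval I \<and> 0 \<in> I \<and> (\<forall>x\<in>M. f x 0 = x) \<and>
     (\<forall>x\<in>M. \<forall>t\<in>I. f x t \<in> N) \<and>
     (\<forall>U (\<phi>::real^'n \<Rightarrow> real^'k). chart M U \<phi> \<longrightarrow> (\<forall>t\<in>I.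
        Ck 2 (\<lambda>v. f (\<phi> v) t) U \<and>
        (\<forall>u\<in>U. invertible (gram tm (\<lambda>v. f (\<phi> v) t) u) \<and>
           ((\<lambda>s. f (\<phi> u) s) has_vector_derivative mean_curv tm N (\<lambda>v. f (\<phi> v) t) u) (at t within I)))))"

end

theory Submission
  imports Defs
begin

(* L(V,u) is the slice <x,x> = -1, x_tm > 0, <x,\<xi>> = a of the hyperboloid, and the normal space of
   L in R^{m,1} at p is span(p, \<xi>). For an immersion X into L the ambient mean curvature therefore
   differs from the one in L by the span(p, \<xi>)-component of the trace of the Hessian, which is
   determined by the constraints <X,X> = -1 and <X,\<xi>> = a:
     H_amb(X) = H_L(X) + n (\<epsilon> X - a \<xi>) / (\<epsilon> + a^2),   \<epsilon> = <\<xi>,\<xi>>,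
   where 1 - \<alpha>^2 = \<epsilon> / (\<epsilon> + a^2) and \<alpha> \<beta> = a / (\<epsilon> + a^2). Moreover H_amb(c X + d) = H_amb(X) / c.
   Hence c(t) f1(x, s(t)) + d(t) is an ambient mean curvature flow as soon as
     c s' = 1 / c,   c' = n (1 - \<alpha>^2) / c,   d' = - (n \<alpha> \<beta> / c) \<xi>,
   which is solved by c = sqrt (2nt(1 - \<alpha>^2) + 1), s = s_\<alpha>, d = (1 - c) \<eta> if \<alpha> \<noteq> 1, and by c = 1,
   s = t, d = - n t \<beta> \<xi> if \<alpha> = 1. Uniqueness of the ambient flow concludes. *)

definition time_flip :: "'k::finite \<Rightarrow> real^'k \<Rightarrow> real^'k" where
  "time_flip tm y = (\<chi> i. if i = tm then - y$i else y$i)"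

lemma linear_time_flip: "linear (time_flip tm)"
  unfolding linear_iff by (auto simp: time_flip_def vec_eq_iff)

lemma time_flip_time_flip [simp]: "time_flip tm (time_flip tm y) = y"
  by (auto simp: time_flip_def vec_eq_iff)

lemma mink_eq_inner_time_flip: "mink tm x y = x \<bullet> time_flip tm y"
proof -
  have "(\<Sum>i\<in>UNIV. x$i * (if i = tm then - y$i else y$i)) =
        (\<Sum>i\<in>UNIV. x$i * y$i - (if i = tm then 2 * (x$i * y$i) else 0))"
    by (rule sum.cong) auto
  then show ?thesis
    by (simp add: mink_def time_flip_def inner_vec_def sum_subtractf)
qed

lemma mink_commute: "mink tm x y = mink tm y x"
  unfolding mink_def by (simp add: mult.commute)

lemma mink_eq_time_flip_inner: "mink tm x y = time_flip tm x \<bullet> y"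
  by (metis mink_commute mink_eq_inner_time_flip inner_commute)

lemma bounded_bilinear_mink: "bounded_bilinear (mink tm)"
proof -
  have "bounded_bilinear (\<lambda>x y. x \<bullet> time_flip tm y)"
    using bounded_bilinear.comp[OF bounded_bilinear_inner bounded_linear_ident, of "time_flip tm"]
    using linear_time_flip linear_conv_bounded_linear by blast
  then show ?thesis by (simp add: mink_eq_inner_time_flip [abs_def])
qed

lemmas mink_add_left = bounded_bilinear.add_left [OF bounded_bilinear_mink]
  and mink_add_right = bounded_bilinear.add_right [OF bounded_bilinear_mink]
  and mink_diff_left = bounded_bilinear.diff_left [OF bounded_bilinear_mink]
  and mink_diff_right = bounded_bilinear.diff_right [OF bounded_bilinear_mink]
  and mink_minus_left = bounded_bilinear.minus_left [OF bounded_bilinear_mink]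
  and mink_minus_right = bounded_bilinear.minus_right [OF bounded_bilinear_mink]
  and mink_scaleR_left = bounded_bilinear.scaleR_left [OF bounded_bilinear_mink]
  and mink_scaleR_right = bounded_bilinear.scaleR_right [OF bounded_bilinear_mink]
  and mink_sum_left = bounded_bilinear.sum_left [OF bounded_bilinear_mink]
  and mink_sum_right = bounded_bilinear.sum_right [OF bounded_bilinear_mink]
  and mink_zero_left [simp] = bounded_bilinear.zero_left [OF bounded_bilinear_mink]
  and mink_zero_right [simp] = bounded_bilinear.zero_right [OF bounded_bilinear_mink]
  and has_derivative_mink = bounded_bilinear.FDERIV [OF bounded_bilinear_mink]

lemmas mink_simps = mink_add_left mink_add_right mink_diff_left mink_diff_right
  mink_minus_left mink_minus_right mink_scaleR_left mink_scaleR_right mink_sum_left mink_sum_right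

lemma mink_nondegenerate: "(\<And>x. mink tm y x = 0) \<Longrightarrow> y = 0"
  by (metis inner_eq_zero_iff mink_eq_inner_time_flip time_flip_time_flip)

section \<open>The slice L(V,u) and its tangent spaces\<close>

definition hyp_slice :: "'k::finite \<Rightarrow> real^'k \<Rightarrow> real \<Rightarrow> (real^'k) set" where
  "hyp_slice tm \<xi> a = hyp_space tm \<inter> {x. mink tm x \<xi> = a}"

lemma mem_hyp_slice: "x \<in> hyp_slice tm \<xi> a \<longleftrightarrow> mink tm x x = -1 \<and> 0 < x$tm \<and> mink tm x \<xi> = a"
  by (auto simp: hyp_slice_def hyp_space_def)

lemma hyperplane_eq_mink_orthogonal:
  fixes V :: "(real^'k::finite) set"
  assumes "subspace V" "dim V = CARD('k) - 1" "\<forall>v\<in>V. mink tm \<xi> v = 0" "\<xi> \<noteq> 0"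
  shows "V = {v. mink tm \<xi> v = 0}"
proof -
  have eq: "{v. mink tm \<xi> v = 0} = {v. time_flip tm \<xi> \<bullet> v = 0}"
    by (simp add: mink_eq_time_flip_inner)
  have "time_flip tm \<xi> \<noteq> 0"
    using \<open>\<xi> \<noteq> 0\<close> by (metis time_flip_time_flip linear_0 linear_time_flip)
  then have "dim {v. time_flip tm \<xi> \<bullet> v = 0} = CARD('k) - 1"
    by (simp add: dim_hyperplane)
  then show ?thesis unfolding eq
    using assms subspace_hyperplane by (intro subspace_dim_equal) (auto simp: mink_eq_time_flip_inner)
qed

lemma Lset_eq_hyp_slice:
  fixes V :: "(real^'k::finite) set"
  assumes "subspace V" "dim V = CARD('k) - 1" "\<forall>v\<in>V. mink tm \<xi> v = 0" "\<xi> \<noteq> 0"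
  shows "Lset tm V u = hyp_slice tm \<xi> (mink tm u \<xi>)"
proof -
  have "x \<in> {v + u |v. v \<in> V} \<longleftrightarrow> x - u \<in> V" for x
    by (force simp: algebra_simps)
  also have "x - u \<in> V \<longleftrightarrow> mink tm x \<xi> = mink tm u \<xi>" for x
    by (subst hyperplane_eq_mink_orthogonal[OF assms]) (simp add: mink_commute[of tm \<xi>] mink_diff_left)
  finally show ?thesis by (auto simp: Lset_def hyp_slice_def)
qed

lemma has_derivative_locally_constant:
  assumes "(f has_derivative f') (at x)" "open U" "x \<in> U" "\<And>y. y \<in> U \<Longrightarrow> f y = c"
  shows "f' = (\<lambda>_. 0)"
proof -
  have "(f has_derivative (\<lambda>_. 0)) (at x)"
    using has_derivative_transform_within_open[OF has_derivative_const assms(2,3)] assms(4) by metis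
  then show ?thesis using assms(1) has_derivative_unique by blast
qed

lemma tangent_space_level_set:
  assumes "w \<in> tangent_space N p" "(g has_derivative g') (at p)" "\<And>x. x \<in> N \<Longrightarrow> g x = c"
  shows "g' w = 0"
proof -
  obtain \<gamma> e where "e > 0" and \<gamma>N: "\<And>s. s \<in> {-e<..<e} \<Longrightarrow> \<gamma> s \<in> N" and "\<gamma> 0 = p"
    and "(\<gamma> has_derivative (\<lambda>r. r *\<^sub>R w)) (at 0)"
    using assms(1) unfolding tangent_space_def has_vector_derivative_def by blast
  then have "(g \<circ> \<gamma> has_derivative g' \<circ> (\<lambda>r. r *\<^sub>R w)) (at 0)"
    using assms(2) by (intro diff_chain_at) simp_all
  then have "g' \<circ> (\<lambda>r. r *\<^sub>R w) = (\<lambda>_. 0)"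
    by (rule has_derivative_locally_constant[of _ _ 0 "{-e<..<e}" c]) (use \<open>e > 0\<close> \<gamma>N assms(3) in auto)
  then show ?thesis by (metis comp_apply scaleR_one)
qed

lemma tangent_space_hyp_slice_subset:
  assumes "w \<in> tangent_space (hyp_slice tm \<xi> a) p"
  shows "mink tm w p = 0" "mink tm w \<xi> = 0"
proof -
  have "mink tm p w + mink tm w p = 0"
    using tangent_space_level_set[OF assms has_derivative_mink[OF has_derivative_ident has_derivative_ident]]
    by (simp add: mem_hyp_slice)
  then show "mink tm w p = 0" by (simp add: mink_commute[of tm p])
  show "mink tm w \<xi> = 0"
    using tangent_space_level_set[OF assms has_derivative_mink[OF has_derivative_ident has_derivative_const]]
    by (simp add: mem_hyp_slice)
qed

lemma quadratic_root_rationalized: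
  fixes A B C :: real
  assumes "B > 0" "B\<^sup>2 + A * C \<ge> 0"
  shows "A * (C / (B + sqrt (B\<^sup>2 + A * C)))\<^sup>2 + 2 * B * (C / (B + sqrt (B\<^sup>2 + A * C))) = C"
proof -
  define r where "r = sqrt (B\<^sup>2 + A * C)"
  define x where "x = C / (B + r)"
  have "B + r > 0" using assms real_sqrt_ge_zero[OF assms(2)] unfolding r_def by linarith
  then have xr: "x * (B + r) = C" by (simp add: x_def)
  have "r\<^sup>2 = B\<^sup>2 + A * C" using assms by (simp add: r_def)
  then have "A * x * (B + r) = (r - B) * (B + r)"
    using xr by (simp add: algebra_simps power2_eq_square flip: mult.assoc)
  then have "A * x = r - B" using \<open>B + r > 0\<close> by simp
  have "A * x\<^sup>2 + 2 * B * x = x * (A * x + 2 * B)" by (simp add: power2_eq_square algebra_simps)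
  also have "\<dots> = x * (B + r)" using \<open>A * x = r - B\<close> by simp
  also have "\<dots> = C" by (rule xr)
  finally show ?thesis by (simp add: x_def r_def)
qed

text \<open>Move along w and correct in the direction z = \<epsilon> p - a \<xi>, which is orthogonal to \<xi> and w;
  the correction coefficient is a root of a quadratic equation, written in rationalized form so
  that it is smooth at s = 0.\<close>

definition slice_curve :: "'k::finite \<Rightarrow> real^'k \<Rightarrow> real^'k \<Rightarrow> real^'k \<Rightarrow> real \<Rightarrow> real^'k" where
  "slice_curve tm \<xi> p w s =
     (let \<epsilon> = mink tm \<xi> \<xi>; a = mink tm p \<xi>; D = \<epsilon> + a\<^sup>2; C = s\<^sup>2 * mink tm w w
      in p + s *\<^sub>R w + (C / (D + sqrt (D\<^sup>2 + \<epsilon> * D * C))) *\<^sub>R (\<epsilon> *\<^sub>R p - a *\<^sub>R \<xi>))"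

lemma slice_curve_mink:
  assumes "mink tm p p = -1" "mink tm w p = 0" "mink tm w \<xi> = 0"
    and D: "mink tm \<xi> \<xi> + (mink tm p \<xi>)\<^sup>2 > 0"
    and disc: "(mink tm \<xi> \<xi> + (mink tm p \<xi>)\<^sup>2)\<^sup>2
                 + mink tm \<xi> \<xi> * (mink tm \<xi> \<xi> + (mink tm p \<xi>)\<^sup>2) * (s\<^sup>2 * mink tm w w) \<ge> 0"
  shows "mink tm (slice_curve tm \<xi> p w s) (slice_curve tm \<xi> p w s) = -1"
    and "mink tm (slice_curve tm \<xi> p w s) \<xi> = mink tm p \<xi>"
proof -
  define \<epsilon> where "\<epsilon> = mink tm \<xi> \<xi>"
  define a where "a = mink tm p \<xi>"
  define D where "D = \<epsilon> + a\<^sup>2"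
  define C where "C = s\<^sup>2 * mink tm w w"
  define r where "r = C / (D + sqrt (D\<^sup>2 + \<epsilon> * D * C))"
  define z where "z = \<epsilon> *\<^sub>R p - a *\<^sub>R \<xi>"
  have \<gamma>: "slice_curve tm \<xi> p w s = p + s *\<^sub>R w + r *\<^sub>R z"
    by (simp add: slice_curve_def \<epsilon>_def a_def D_def C_def r_def z_def Let_def)
  have root: "(\<epsilon> * D) * r\<^sup>2 + 2 * D * r = C"
    unfolding r_def using quadratic_root_rationalized[of D "\<epsilon> * D" C] D disc
    by (simp add: D_def \<epsilon>_def a_def C_def mult.assoc)
  have basic: "mink tm p p = -1" "mink tm p \<xi> = a" "mink tm \<xi> p = a" "mink tm \<xi> \<xi> = \<epsilon>"
    "mink tm w p = 0" "mink tm p w = 0" "mink tm w \<xi> = 0" "mink tm \<xi> w = 0"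
    using assms by (simp_all add: a_def \<epsilon>_def mink_commute[of tm \<xi> p] mink_commute[of tm p w]
      mink_commute[of tm \<xi> w])
  have z: "mink tm p z = - D" "mink tm z p = - D" "mink tm w z = 0" "mink tm z w = 0"
    "mink tm \<xi> z = 0" "mink tm z \<xi> = 0" "mink tm z z = - \<epsilon> * D"
    by (simp_all add: z_def D_def mink_simps basic power2_eq_square algebra_simps)
  have "mink tm (p + s *\<^sub>R w + r *\<^sub>R z) (p + s *\<^sub>R w + r *\<^sub>R z)
        = -1 + C - 2 * D * r - (\<epsilon> * D) * r\<^sup>2"
    by (simp add: C_def mink_simps basic z power2_eq_square algebra_simps)
  then show "mink tm (slice_curve tm \<xi> p w s) (slice_curve tm \<xi> p w s) = -1"
    using root by (simp add: \<gamma>)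
  show "mink tm (slice_curve tm \<xi> p w s) \<xi> = mink tm p \<xi>"
    by (simp add: \<gamma> mink_simps basic z)
qed

lemma slice_curve_has_vector_derivative:
  assumes "mink tm \<xi> \<xi> + (mink tm p \<xi>)\<^sup>2 > 0"
  shows "(slice_curve tm \<xi> p w has_vector_derivative w) (at 0)"
  unfolding slice_curve_def Let_def using assms
  by (auto intro!: derivative_eq_intros simp: has_vector_derivative_def)

lemma slice_curve_in_hyp_slice:
  assumes D: "mink tm \<xi> \<xi> + a\<^sup>2 > 0" and p: "p \<in> hyp_slice tm \<xi> a"
    and w: "mink tm w p = 0" "mink tm w \<xi> = 0"
  obtains e where "e > 0" "\<And>s. s \<in> {-e<..<e} \<Longrightarrow> slice_curve tm \<xi> p w s \<in> hyp_slice tm \<xi> a"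
proof -
  define \<gamma> where "\<gamma> = slice_curve tm \<xi> p w"
  define D where "D = mink tm \<xi> \<xi> + a\<^sup>2"
  define disc where "disc s = D\<^sup>2 + mink tm \<xi> \<xi> * D * (s\<^sup>2 * mink tm w w)" for s
  have pa: "mink tm p \<xi> = a" "mink tm p p = -1" "p$tm > 0" using p by (simp_all add: mem_hyp_slice)
  have "isCont \<gamma> 0"
    using slice_curve_has_vector_derivative[of tm \<xi> p w] D pa
    by (simp add: \<gamma>_def has_vector_derivative_def has_derivative_continuous)
  moreover have "\<gamma> 0 = p" by (simp add: \<gamma>_def slice_curve_def)
  ultimately have "((\<lambda>s. \<gamma> s $ tm) \<longlongrightarrow> p $ tm) (at 0)"
    by (metis isCont_def tendsto_vec_nth)
  then have "\<forall>\<^sub>F s in at 0. 0 < \<gamma> s $ tm"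
    by (rule order_tendstoD(1)) (use pa in simp)
  moreover have "(disc \<longlongrightarrow> D\<^sup>2) (at 0)"
    unfolding disc_def by (auto intro!: tendsto_eq_intros)
  then have "\<forall>\<^sub>F s in at 0. 0 < disc s"
    by (rule order_tendstoD(1)) (use D in \<open>simp add: D_def\<close>)
  ultimately have "\<forall>\<^sub>F s in at 0. 0 < \<gamma> s $ tm \<and> 0 < disc s"
    by (rule eventually_conj)
  then obtain e where "e > 0" and e: "\<And>s. s \<noteq> 0 \<Longrightarrow> dist s 0 < e \<Longrightarrow> 0 < \<gamma> s $ tm \<and> 0 < disc s"
    unfolding eventually_at by auto
  have "\<gamma> s \<in> hyp_slice tm \<xi> a" if "s \<in> {-e<..<e}" for s
  proof (cases "s = 0")
    case True then show ?thesis using p by (simp add: \<gamma>_def slice_curve_def)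
  next
    case False
    then have "0 < \<gamma> s $ tm" "0 < disc s" using e that by (auto simp: dist_real_def)
    moreover have "mink tm (\<gamma> s) (\<gamma> s) = -1" "mink tm (\<gamma> s) \<xi> = mink tm p \<xi>"
      unfolding \<gamma>_def using w pa D \<open>0 < disc s\<close> unfolding disc_def D_def
      by (intro slice_curve_mink; simp)+
    ultimately show ?thesis using pa by (simp add: mem_hyp_slice)
  qed
  then show ?thesis using \<open>e > 0\<close> that by (simp add: \<gamma>_def)
qed

lemma tangent_space_hyp_slice:
  assumes D: "mink tm \<xi> \<xi> + a\<^sup>2 > 0" and p: "p \<in> hyp_slice tm \<xi> a"
  shows "tangent_space (hyp_slice tm \<xi> a) p = {w. mink tm w p = 0 \<and> mink tm w \<xi> = 0}"
proof (intro equalityI subsetI)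
  fix w assume "w \<in> tangent_space (hyp_slice tm \<xi> a) p"
  then show "w \<in> {w. mink tm w p = 0 \<and> mink tm w \<xi> = 0}"
    using tangent_space_hyp_slice_subset by blast
next
  fix w assume "w \<in> {w. mink tm w p = 0 \<and> mink tm w \<xi> = 0}"
  then obtain e where "e > 0" "\<And>s. s \<in> {-e<..<e} \<Longrightarrow> slice_curve tm \<xi> p w s \<in> hyp_slice tm \<xi> a"
    using slice_curve_in_hyp_slice[OF D p] by blast
  moreover have "(slice_curve tm \<xi> p w has_vector_derivative w) (at 0)"
    using D p by (intro slice_curve_has_vector_derivative) (simp add: mem_hyp_slice)
  moreover have "slice_curve tm \<xi> p w 0 = p" by (simp add: slice_curve_def)
  ultimately show "w \<in> tangent_space (hyp_slice tm \<xi> a) p"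
    unfolding tangent_space_def by blast
qed

lemma matrix_inv_mult:
  assumes "invertible A"
  shows "A ** matrix_inv A = mat 1" "matrix_inv A ** A = mat 1"
  using someI_ex[OF assms[unfolded invertible_def]] by (simp_all add: matrix_inv_def)

lemma matrix_inv_eqI:
  fixes A :: "real^'n::finite^'n"
  assumes "A ** B = mat 1" "B ** A = mat 1"
  shows "matrix_inv A = B"
proof -
  have "invertible A" using assms invertible_def by blast
  have "matrix_inv A = matrix_inv A ** (A ** B)" by (simp add: assms(1))
  also have "\<dots> = (matrix_inv A ** A) ** B" by (rule matrix_mul_assoc)
  finally show ?thesis by (simp add: matrix_inv_mult[OF \<open>invertible A\<close>])
qed

lemma nproj_unique:
  assumes sub: "\<And>x y. x \<in> normal_space tm N p D \<Longrightarrow> y \<in> normal_space tm N p D \<Longrightarrow>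
                  x - y \<in> normal_space tm N p D"
    and P: "\<And>x. P x \<in> normal_space tm N p D"
    and P_perp: "\<And>x z. z \<in> normal_space tm N p D \<Longrightarrow> mink tm (x - P x) z = 0"
  shows "nproj tm N p D v = P v"
  unfolding nproj_def
proof (rule the_equality)
  show "P v \<in> normal_space tm N p D \<and> (\<forall>z\<in>normal_space tm N p D. mink tm (v - P v) z = 0)"
    using P P_perp by blast
next
  fix w assume w: "w \<in> normal_space tm N p D \<and> (\<forall>z\<in>normal_space tm N p D. mink tm (v - w) z = 0)"
  define y where "y = w - P v"
  have yN: "y \<in> normal_space tm N p D" using sub w P by (simp add: y_def)
  have "mink tm y z = 0" if "z \<in> normal_space tm N p D" for z
    using w P_perp[OF that, of v] that
    by (simp add: y_def mink_diff_left mink_commute[of tm "v - _" z] mink_diff_right)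
  then have "mink tm y x = 0" for x
    using P_perp[OF yN, of x] P[of x]
    by (metis diff_add_cancel mink_add_right mink_commute add.right_neutral)
  then have "y = 0" by (rule mink_nondegenerate)
  then show "w = P v" by (simp add: y_def)
qed

lemma tangent_space_UNIV: "tangent_space UNIV p = UNIV"
proof -
  have "v \<in> tangent_space UNIV p" for v
    unfolding tangent_space_def
    by (intro CollectI exI[of _ "\<lambda>s. p + s *\<^sub>R v"] exI[of _ 1]) (auto intro!: derivative_eq_intros)
  then show ?thesis by blast
qed

lemma normal_space_UNIV: "normal_space tm UNIV p D = {w. \<forall>i. mink tm w (D i) = 0}"
  by (simp add: normal_space_def tangent_space_UNIV)

definition frame_gram :: "'k::finite \<Rightarrow> ('n::finite \<Rightarrow> real^'k) \<Rightarrow> real^'n^'n" where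
  "frame_gram tm D = (\<chi> i j. mink tm (D i) (D j))"

lemma gram_eq_frame_gram: "gram tm X u = frame_gram tm (\<lambda>l. pd X l u)"
  by (simp add: gram_def frame_gram_def)

definition frame_perp :: "'k::finite \<Rightarrow> ('n::finite \<Rightarrow> real^'k) \<Rightarrow> real^'k \<Rightarrow> real^'k" where
  "frame_perp tm D x =
     x - (\<Sum>i\<in>UNIV. (\<Sum>j\<in>UNIV. matrix_inv (frame_gram tm D) $ i $ j * mink tm x (D j)) *\<^sub>R D i)"

lemma frame_perp_orthogonal:
  assumes "invertible (frame_gram tm D)"
  shows "mink tm (frame_perp tm D x) (D k) = 0"
proof -
  let ?g = "frame_gram tm D" and ?gi = "matrix_inv (frame_gram tm D)"
  have "mink tm (\<Sum>i\<in>UNIV. (\<Sum>j\<in>UNIV. ?gi $ i $ j * mink tm x (D j)) *\<^sub>R D i) (D k)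
      = (\<Sum>i\<in>UNIV. \<Sum>j\<in>UNIV. mink tm x (D j) * (?g $ k $ i * ?gi $ i $ j))"
    by (simp add: mink_sum_left mink_scaleR_left sum_distrib_left sum_distrib_right frame_gram_def
        mink_commute[of tm _ "D k"] mult_ac)
  also have "\<dots> = (\<Sum>j\<in>UNIV. mink tm x (D j) * (?g ** ?gi) $ k $ j)"
    by (subst sum.swap) (simp add: matrix_matrix_mult_def sum_distrib_left)
  also have "\<dots> = mink tm x (D k)"
    by (simp add: matrix_inv_mult[OF assms] mat_def if_distrib cong: if_cong)
  finally show ?thesis by (simp add: frame_perp_def mink_diff_left)
qed

lemma mink_frame_perp_residual:
  assumes "\<And>i. mink tm z (D i) = 0"
  shows "mink tm (x - frame_perp tm D x) z = 0"
  using assms by (simp add: frame_perp_def mink_sum_left mink_scaleR_left mink_commute[of tm "D _" z])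

lemma frame_perp_scaleR: "frame_perp tm D (c *\<^sub>R x) = c *\<^sub>R frame_perp tm D x"
  by (simp add: frame_perp_def mink_scaleR_left scaleR_diff_right scaleR_sum_right
      sum_distrib_left mult.left_commute)

lemma matrix_inv_scaleR:
  fixes A :: "real^'n::finite^'n"
  assumes "invertible A" "k \<noteq> 0"
  shows "matrix_inv (k *\<^sub>R A) = (1/k) *\<^sub>R matrix_inv A"
  using assms by (intro matrix_inv_eqI)
    (simp_all add: matrix_scalar_ac matrix_inv_mult flip: scalar_matrix_assoc)

lemma frame_perp_scaleR_frame:
  assumes "invertible (frame_gram tm D)" "c \<noteq> 0"
  shows "frame_perp tm (\<lambda>l. c *\<^sub>R D l) = frame_perp tm D"
proof -
  have "frame_gram tm (\<lambda>l. c *\<^sub>R D l) = c\<^sup>2 *\<^sub>R frame_gram tm D"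
    by (simp add: frame_gram_def vec_eq_iff mink_scaleR_left mink_scaleR_right power2_eq_square)
  then have "matrix_inv (frame_gram tm (\<lambda>l. c *\<^sub>R D l)) = (1 / c\<^sup>2) *\<^sub>R matrix_inv (frame_gram tm D)"
    using assms by (simp add: matrix_inv_scaleR)
  then show ?thesis
    using assms(2) by (simp add: fun_eq_iff frame_perp_def mink_scaleR_right power2_eq_square
        flip: sum_divide_distrib)
qed

lemma nproj_UNIV:
  assumes "invertible (frame_gram tm D)"
  shows "nproj tm UNIV p D v = frame_perp tm D v"
proof (rule nproj_unique)
  fix x z assume "z \<in> normal_space tm UNIV p D"
  then show "mink tm (x - frame_perp tm D x) z = 0"
    by (intro mink_frame_perp_residual) (simp add: normal_space_UNIV)
qed (auto simp: normal_space_UNIV mink_diff_left frame_perp_orthogonal[OF assms])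

text \<open>The Minkowski-orthogonal projection onto span(p, \<xi>); its Gram matrix
  [[-1, a], [a, \<epsilon>]] has determinant -(\<epsilon> + a^2).\<close>

definition plane_part :: "'k::finite \<Rightarrow> real^'k \<Rightarrow> real^'k \<Rightarrow> real^'k \<Rightarrow> real^'k" where
  "plane_part tm \<xi> p y =
     (let \<epsilon> = mink tm \<xi> \<xi>; a = mink tm p \<xi>; D = \<epsilon> + a\<^sup>2 in
      ((a * mink tm y \<xi> - \<epsilon> * mink tm y p) / D) *\<^sub>R p + ((a * mink tm y p + mink tm y \<xi>) / D) *\<^sub>R \<xi>)"

lemma mink_plane_part:
  assumes "mink tm p p = -1" "mink tm \<xi> \<xi> + (mink tm p \<xi>)\<^sup>2 \<noteq> 0"
  shows "mink tm (plane_part tm \<xi> p y) p = mink tm y p"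
    and "mink tm (plane_part tm \<xi> p y) \<xi> = mink tm y \<xi>"
proof -
  define \<epsilon> a D Y Z where "\<epsilon> = mink tm \<xi> \<xi>" and "a = mink tm p \<xi>" and "D = \<epsilon> + a\<^sup>2"
    and "Y = mink tm y p" and "Z = mink tm y \<xi>"
  have "D \<noteq> 0" using assms(2) by (simp add: D_def \<epsilon>_def a_def)
  have "(a * Z - \<epsilon> * Y) * -1 + (a * Y + Z) * a = D * Y" "(a * Z - \<epsilon> * Y) * a + (a * Y + Z) * \<epsilon> = D * Z"
    by (simp_all add: D_def power2_eq_square algebra_simps)
  then have "(a * Z - \<epsilon> * Y) / D * -1 + (a * Y + Z) / D * a = Y"
    "(a * Z - \<epsilon> * Y) / D * a + (a * Y + Z) / D * \<epsilon> = Z"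
    using \<open>D \<noteq> 0\<close> by (simp_all add: divide_simps)
  then show "mink tm (plane_part tm \<xi> p y) p = mink tm y p" "mink tm (plane_part tm \<xi> p y) \<xi> = mink tm y \<xi>"
    using assms(1) by (simp_all add: plane_part_def Let_def mink_simps mink_commute[of tm \<xi> p]
      flip: \<epsilon>_def a_def D_def Y_def Z_def)
qed

lemma mink_plane_part_orthogonal:
  assumes "mink tm z p = 0" "mink tm z \<xi> = 0"
  shows "mink tm (plane_part tm \<xi> p y) z = 0"
  using assms by (simp add: plane_part_def Let_def mink_simps mink_commute[of tm _ z])

lemma plane_part_cong:
  "mink tm y p = mink tm y' p \<Longrightarrow> mink tm y \<xi> = mink tm y' \<xi> \<Longrightarrow>
    plane_part tm \<xi> p y = plane_part tm \<xi> p y'"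
  by (simp add: plane_part_def)

lemma nproj_hyp_slice:
  assumes D: "mink tm \<xi> \<xi> + a\<^sup>2 > 0" and p: "p \<in> hyp_slice tm \<xi> a"
    and inv: "invertible (frame_gram tm D)"
    and D_perp: "\<And>i. mink tm (D i) p = 0" "\<And>i. mink tm (D i) \<xi> = 0"
  shows "nproj tm (hyp_slice tm \<xi> a) p D v = frame_perp tm D v - plane_part tm \<xi> p (frame_perp tm D v)"
proof -
  have pp: "mink tm p p = -1" "mink tm p \<xi> = a" using p by (simp_all add: mem_hyp_slice)
  have D': "mink tm \<xi> \<xi> + (mink tm p \<xi>)\<^sup>2 \<noteq> 0" using D pp by simp
  have N: "normal_space tm (hyp_slice tm \<xi> a) p D
           = {w. mink tm w p = 0 \<and> mink tm w \<xi> = 0 \<and> (\<forall>i. mink tm w (D i) = 0)}"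
    unfolding normal_space_def tangent_space_hyp_slice[OF D p] by auto
  show ?thesis
  proof (rule nproj_unique)
    fix x
    have "mink tm (plane_part tm \<xi> p (frame_perp tm D x)) (D i) = 0" for i
      by (rule mink_plane_part_orthogonal) (simp_all add: mink_commute[of tm "D i"] D_perp)
    then show "frame_perp tm D x - plane_part tm \<xi> p (frame_perp tm D x) \<in> normal_space tm (hyp_slice tm \<xi> a) p D"
      unfolding N using mink_plane_part[OF pp(1) D']
      by (simp add: mink_diff_left frame_perp_orthogonal[OF inv])
  next
    fix x z assume "z \<in> normal_space tm (hyp_slice tm \<xi> a) p D"
    then have z: "mink tm z p = 0" "mink tm z \<xi> = 0" "\<And>i. mink tm z (D i) = 0" unfolding N by auto
    have "mink tm (x - (frame_perp tm D x - plane_part tm \<xi> p (frame_perp tm D x))) z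
          = mink tm (x - frame_perp tm D x) z + mink tm (plane_part tm \<xi> p (frame_perp tm D x)) z"
      by (simp add: mink_simps)
    then show "mink tm (x - (frame_perp tm D x - plane_part tm \<xi> p (frame_perp tm D x))) z = 0"
      using mink_frame_perp_residual[OF z(3)] mink_plane_part_orthogonal[OF z(1,2)] by simp
  qed (auto simp: N mink_diff_left)
qed

lemma pd_eq_frechet_derivative:
  fixes f :: "real^'n::finite \<Rightarrow> real^'k::finite"
  assumes "f differentiable (at u)"
  shows "pd f i u = frechet_derivative f (at u) (axis i 1)"
proof -
  let ?f' = "frechet_derivative f (at u)"
  have "((\<lambda>r::real. u + r *\<^sub>R axis i 1) has_derivative (\<lambda>r. r *\<^sub>R axis i 1)) (at 0)"
    by (auto intro!: derivative_eq_intros)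
  then have "(f \<circ> (\<lambda>r. u + r *\<^sub>R axis i 1) has_derivative ?f' \<circ> (\<lambda>r. r *\<^sub>R axis i 1)) (at 0)"
    using assms frechet_derivative_works by (intro diff_chain_at) auto
  moreover have "linear ?f'"
    using assms frechet_derivative_works has_derivative_linear by blast
  then have "?f' \<circ> (\<lambda>r. r *\<^sub>R axis i 1) = (\<lambda>r. r *\<^sub>R ?f' (axis i 1))"
    by (simp add: o_def linear_scale)
  ultimately have "((\<lambda>r. f (u + r *\<^sub>R axis i 1)) has_vector_derivative ?f' (axis i 1)) (at 0)"
    by (simp add: has_vector_derivative_def o_def)
  then show ?thesis unfolding pd_def by (rule vector_derivative_at)
qed

lemma pd_cong_open:
  fixes f g :: "real^'n::finite \<Rightarrow> real^'k::finite"
  assumes "open U" "u \<in> U" "\<And>v. v \<in> U \<Longrightarrow> f v = g v"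
  shows "pd f i u = pd g i u"
proof -
  let ?S = "(\<lambda>r::real. u + r *\<^sub>R axis i 1) -` U"
  have "open ?S" using assms(1) by (intro continuous_open_vimage) (auto intro!: continuous_intros)
  moreover have "0 \<in> ?S" using assms(2) by simp
  ultimately have "((\<lambda>r. f (u + r *\<^sub>R axis i 1)) has_vector_derivative y) (at 0) \<longleftrightarrow>
        ((\<lambda>r. g (u + r *\<^sub>R axis i 1)) has_vector_derivative y) (at 0)" for y
    using assms(3) by (auto elim!: has_vector_derivative_transform_within_open)
  then show ?thesis unfolding pd_def vector_derivative_def by simp
qed

lemma differentiable_cong_open:
  assumes "f differentiable (at x)" "open U" "x \<in> U" "\<And>v. v \<in> U \<Longrightarrow> f v = g v"
  shows "g differentiable (at x)"
  using assms has_derivative_transform_within_open unfolding differentiable_def by blast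

lemma pd_scaleR_add:
  fixes X :: "real^'n::finite \<Rightarrow> real^'k::finite"
  assumes "X differentiable (at u)"
  shows "pd (\<lambda>v. c *\<^sub>R X v + d) i u = c *\<^sub>R pd X i u"
proof -
  have "((\<lambda>v. c *\<^sub>R X v + d) has_derivative (\<lambda>h. c *\<^sub>R frechet_derivative X (at u) h)) (at u)"
    using assms frechet_derivative_works by (auto intro!: derivative_eq_intros)
  then show ?thesis
    by (simp add: pd_eq_frechet_derivative[OF assms] pd_eq_frechet_derivative[OF differentiableI]
        flip: frechet_derivative_at)
qed

lemma pd_const [simp]: "pd (\<lambda>_. c) i u = 0"
  by (simp add: pd_def)

lemma mink_pd_of_locally_constant:
  fixes X Y :: "real^'n::finite \<Rightarrow> real^'k::finite"
  assumes "X differentiable (at u)" "Y differentiable (at u)" "open U" "u \<in> U"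
    and "\<And>v. v \<in> U \<Longrightarrow> mink tm (X v) (Y v) = c"
  shows "mink tm (pd X i u) (Y u) + mink tm (X u) (pd Y i u) = 0"
proof -
  have "((\<lambda>v. mink tm (X v) (Y v)) has_derivative
      (\<lambda>h. mink tm (X u) (frechet_derivative Y (at u) h) + mink tm (frechet_derivative X (at u) h) (Y u))) (at u)"
    using assms frechet_derivative_works by (intro has_derivative_mink) auto
  from fun_cong[OF has_derivative_locally_constant[OF this assms(3-5)], of "axis i 1"] show ?thesis
    using assms(1,2) by (simp add: pd_eq_frechet_derivative add.commute)
qed

lemma Ck_cong_open:
  fixes f g :: "'a::euclidean_space \<Rightarrow> 'b::real_normed_vector"
  assumes "open U" "\<And>x. x \<in> U \<Longrightarrow> f x = g x" "Ck k f U"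
  shows "Ck k g U"
  using assms(2,3)
proof (induction k arbitrary: f g)
  case 0
  then show ?case using continuous_on_cong[of U U f g] by simp
next
  case (Suc k)
  have "g differentiable (at x)" if "x \<in> U" for x
    using Suc.prems that by (auto intro: differentiable_cong_open[OF _ assms(1) that, of f])
  moreover have "frechet_derivative f (at x) = frechet_derivative g (at x)" if "x \<in> U" for x
    using Suc.prems that by (intro frechet_derivative_transform_within_open[OF _ assms(1)]) auto
  ultimately have "Ck k (\<lambda>x. frechet_derivative g (at x) i) U" if "i \<in> Basis" for i
    using Suc.prems that by (auto intro: Suc.IH[of "\<lambda>x. frechet_derivative f (at x) i"])
  with \<open>\<And>x. x \<in> U \<Longrightarrow> g differentiable (at x)\<close> show ?case by simp
qed

lemma Ck_scaleR_add:
  fixes f :: "'a::euclidean_space \<Rightarrow> 'b::real_normed_vector"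
  assumes "open U" "Ck k f U"
  shows "Ck k (\<lambda>x. c *\<^sub>R f x + d) U"
  using assms(2)
proof (induction k arbitrary: f d)
  case 0 then show ?case by (auto intro!: continuous_intros)
next
  case (Suc k)
  have fd: "frechet_derivative (\<lambda>x. c *\<^sub>R f x + d) (at x) = (\<lambda>h. c *\<^sub>R frechet_derivative f (at x) h + 0)"
    if "x \<in> U" for x
    using Suc.prems that frechet_derivative_works
    by (intro frechet_derivative_at[symmetric]) (auto intro!: derivative_eq_intros)
  have "Ck k (\<lambda>x. frechet_derivative (\<lambda>x. c *\<^sub>R f x + d) (at x) i) U" if "i \<in> Basis" for i
    using Suc.IH[of "\<lambda>x. frechet_derivative f (at x) i" 0] Suc.prems that
    by (auto intro: Ck_cong_open[OF assms(1), of "\<lambda>x. c *\<^sub>R frechet_derivative f (at x) i + 0"] simp: fd)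
  moreover have "(\<lambda>x. c *\<^sub>R f x + d) differentiable (at x)" if "x \<in> U" for x
    using Suc.prems that by (simp add: differentiable_add differentiable_scaleR)
  ultimately show ?case by simp
qed

lemma Ck2_differentiable:
  fixes X :: "real^'n::finite \<Rightarrow> real^'k::finite"
  assumes "Ck 2 X U" "open U" "v \<in> U"
  shows "X differentiable (at v)" "pd X j differentiable (at v)"
proof -
  have C: "Ck (Suc (Suc 0)) X U" using assms(1) by (simp add: numeral_2_eq_2)
  then show "X differentiable (at v)" using assms(3) by simp
  have "(\<lambda>x. frechet_derivative X (at x) (axis j 1)) differentiable (at v)"
    using C assms(3) by (simp add: Basis_vec_def)
  then show "pd X j differentiable (at v)"
    by (rule differentiable_cong_open[OF _ assms(2,3)]) (use C in \<open>simp add: pd_eq_frechet_derivative\<close>)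
qed

lemma hyp_slice_immersion_pd:
  fixes X :: "real^'n::finite \<Rightarrow> real^'k::finite"
  assumes U: "open U" "u \<in> U" and C: "Ck 2 X U" and XU: "X ` U \<subseteq> hyp_slice tm \<xi> a"
  shows "mink tm (pd X i u) (X u) = 0" "mink tm (pd X i u) \<xi> = 0"
    and "mink tm (pd (pd X j) i u) \<xi> = 0"
    and "mink tm (pd (pd X j) i u) (X u) = - mink tm (pd X j u) (pd X i u)"
proof -
  have dX: "X differentiable (at v)" "pd X l differentiable (at v)" if "v \<in> U" for v l
    using Ck2_differentiable[OF C U(1) that] by auto
  have XX: "mink tm (X v) (X v) = -1" and X\<xi>: "mink tm (X v) \<xi> = a" if "v \<in> U" for v
    using XU that by (auto simp: mem_hyp_slice)
  have first: "mink tm (pd X l v) (X v) = 0 \<and> mink tm (pd X l v) \<xi> = 0" if "v \<in> U" for v l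
    using mink_pd_of_locally_constant[where i = l, OF dX(1)[OF that] dX(1)[OF that] U(1) that XX]
      mink_pd_of_locally_constant[where Y = "\<lambda>_. \<xi>" and i = l, OF dX(1)[OF that] _ U(1) that X\<xi>]
    by (simp add: mink_commute[of tm "X v"])
  then show "mink tm (pd X i u) (X u) = 0" "mink tm (pd X i u) \<xi> = 0" using U(2) by auto
  show "mink tm (pd (pd X j) i u) \<xi> = 0"
    using mink_pd_of_locally_constant[where Y = "\<lambda>_. \<xi>" and c = 0 and i = i, OF dX(2)[OF U(2)] _ U] first
    by simp
  show "mink tm (pd (pd X j) i u) (X u) = - mink tm (pd X j u) (pd X i u)"
    using mink_pd_of_locally_constant[where c = 0 and i = i, OF dX(2)[OF U(2)] dX(1)[OF U(2)] U] first
    by (simp add: eq_neg_iff_add_eq_0)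
qed

section \<open>Mean curvature in the slice and in the ambient space\<close>

lemma sum_matrix_inv_transpose_mult:
  fixes g :: "real^'n::finite^'n"
  assumes "invertible g"
  shows "(\<Sum>i\<in>UNIV. \<Sum>j\<in>UNIV. matrix_inv g $ i $ j * g $ j $ i) = real CARD('n)"
proof -
  have "(\<Sum>i\<in>UNIV. \<Sum>j\<in>UNIV. matrix_inv g $ i $ j * g $ j $ i) = (\<Sum>i\<in>UNIV. (matrix_inv g ** g) $ i $ i)"
    by (simp add: matrix_matrix_mult_def)
  then show ?thesis by (simp add: matrix_inv_mult[OF assms] mat_def)
qed

lemma mean_curv_UNIV:
  assumes "invertible (gram tm X u)"
  shows "mean_curv tm UNIV X u = (\<Sum>i\<in>UNIV. \<Sum>j\<in>UNIV.
           matrix_inv (gram tm X u) $ i $ j *\<^sub>R frame_perp tm (\<lambda>l. pd X l u) (pd (pd X j) i u))"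
  using assms by (simp add: mean_curv_def gram_eq_frame_gram nproj_UNIV)

lemma mean_curv_UNIV_hyp_slice:
  fixes X :: "real^'n::finite \<Rightarrow> real^'k::finite"
  assumes D: "mink tm \<xi> \<xi> + a\<^sup>2 > 0" and X: "X u \<in> hyp_slice tm \<xi> a"
    and inv: "invertible (gram tm X u)"
    and X1: "\<And>i. mink tm (pd X i u) (X u) = 0" "\<And>i. mink tm (pd X i u) \<xi> = 0"
    and X2: "\<And>i j. mink tm (pd (pd X j) i u) \<xi> = 0"
      "\<And>i j. mink tm (pd (pd X j) i u) (X u) = - mink tm (pd X j u) (pd X i u)"
  shows "mean_curv tm UNIV X u = mean_curv tm (hyp_slice tm \<xi> a) X u
     + (real CARD('n) * mink tm \<xi> \<xi> / (mink tm \<xi> \<xi> + a\<^sup>2)) *\<^sub>R X u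
     - (real CARD('n) * a / (mink tm \<xi> \<xi> + a\<^sup>2)) *\<^sub>R \<xi>"
proof -
  define g where "g = gram tm X u"
  define P where "P = frame_perp tm (\<lambda>l. pd X l u)"
  define H where "H = (\<lambda>i j. pd (pd X j) i u)"
  define W where "W = (mink tm \<xi> \<xi> / (mink tm \<xi> \<xi> + a\<^sup>2)) *\<^sub>R X u - (a / (mink tm \<xi> \<xi> + a\<^sup>2)) *\<^sub>R \<xi>"
  have inv': "invertible (frame_gram tm (\<lambda>l. pd X l u))" using inv by (simp add: gram_eq_frame_gram)
  have Xa: "mink tm (X u) \<xi> = a" using X by (simp add: mem_hyp_slice)
  have mL: "mean_curv tm (hyp_slice tm \<xi> a) X u
            = (\<Sum>i\<in>UNIV. \<Sum>j\<in>UNIV. matrix_inv g $ i $ j *\<^sub>R (P (H i j) - plane_part tm \<xi> (X u) (P (H i j))))"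
    by (simp add: mean_curv_def g_def P_def H_def gram_eq_frame_gram nproj_hyp_slice[OF D X inv' X1])
  have plane: "plane_part tm \<xi> (X u) (P (H i j)) = g $ j $ i *\<^sub>R W" for i j
  proof -
    have "mink tm (P (H i j)) (X u) = mink tm (H i j) (X u)" "mink tm (P (H i j)) \<xi> = mink tm (H i j) \<xi>"
      using mink_frame_perp_residual[of tm _ "\<lambda>l. pd X l u" "H i j"] X1
      by (simp_all add: P_def mink_diff_left mink_commute[of tm _ "pd X _ u"])
    then have "plane_part tm \<xi> (X u) (P (H i j)) = plane_part tm \<xi> (X u) (H i j)"
      by (rule plane_part_cong)
    then show ?thesis
      using X2[of j i] by (simp add: plane_part_def Let_def Xa W_def g_def gram_def H_def
        scaleR_diff_right mult.commute)
  qed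
  have "mean_curv tm UNIV X u - mean_curv tm (hyp_slice tm \<xi> a) X u
        = (\<Sum>i\<in>UNIV. \<Sum>j\<in>UNIV. (matrix_inv g $ i $ j * g $ j $ i) *\<^sub>R W)"
    unfolding mean_curv_UNIV[OF inv] mL
    by (simp add: plane[unfolded g_def P_def H_def] g_def P_def H_def flip: sum_subtractf scaleR_diff_right)
  also have "\<dots> = real CARD('n) *\<^sub>R W"
    using sum_matrix_inv_transpose_mult[OF inv] by (simp add: g_def flip: scaleR_sum_left)
  finally show ?thesis by (simp add: W_def scaleR_diff_right algebra_simps)
qed

lemma mean_curv_UNIV_scaleR_add:
  fixes X :: "real^'n::finite \<Rightarrow> real^'k::finite"
  assumes U: "open U" "u \<in> U" and C: "Ck 2 X U" and c: "c \<noteq> 0"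
    and inv: "invertible (gram tm X u)"
  shows "gram tm (\<lambda>v. c *\<^sub>R X v + d) u = c\<^sup>2 *\<^sub>R gram tm X u"
    and "mean_curv tm UNIV (\<lambda>v. c *\<^sub>R X v + d) u = (1/c) *\<^sub>R mean_curv tm UNIV X u"
proof -
  define Y where "Y = (\<lambda>v. c *\<^sub>R X v + d)"
  have dX: "X differentiable (at v)" "pd X l differentiable (at v)" if "v \<in> U" for v l
    using Ck2_differentiable[OF C U(1) that] by auto
  have pdY: "pd Y l v = c *\<^sub>R pd X l v" if "v \<in> U" for l v
    unfolding Y_def by (rule pd_scaleR_add[OF dX(1)[OF that]])
  show gram: "gram tm (\<lambda>v. c *\<^sub>R X v + d) u = c\<^sup>2 *\<^sub>R gram tm X u"
    unfolding Y_def[symmetric] gram_def pdY[OF U(2)]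
    by (simp add: vec_eq_iff mink_scaleR_left mink_scaleR_right power2_eq_square)
  have "pd (pd Y j) i u = pd (\<lambda>v. c *\<^sub>R pd X j v + 0) i u" for i j
    using pdY by (intro pd_cong_open[OF U]) simp
  also have "\<dots> i j = c *\<^sub>R pd (pd X j) i u" for i j
    by (rule pd_scaleR_add[OF dX(2)[OF U(2)]])
  finally have ppdY: "pd (pd Y j) i u = c *\<^sub>R pd (pd X j) i u" for i j .
  have "invertible (gram tm Y u)"
    using gram inv c by (simp add: Y_def scalar_invertible)
  then have "mean_curv tm UNIV Y u = (\<Sum>i\<in>UNIV. \<Sum>j\<in>UNIV.
      ((1 / c\<^sup>2) * matrix_inv (gram tm X u) $ i $ j) *\<^sub>R frame_perp tm (\<lambda>l. pd X l u) (c *\<^sub>R pd (pd X j) i u))"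
    using inv c
    by (simp add: mean_curv_UNIV ppdY pdY[OF U(2)] gram[folded Y_def] matrix_inv_scaleR
        frame_perp_scaleR_frame gram_eq_frame_gram[symmetric])
  also have "\<dots> = (1/c) *\<^sub>R mean_curv tm UNIV X u"
    using c by (simp add: mean_curv_UNIV[OF inv] scaleR_sum_right frame_perp_scaleR power2_eq_square)
  finally show "mean_curv tm UNIV (\<lambda>v. c *\<^sub>R X v + d) u = (1/c) *\<^sub>R mean_curv tm UNIV X u"
    by (simp add: Y_def)
qed

lemma mean_curv_UNIV_scaleR_add_hyp_slice:
  fixes X :: "real^'n::finite \<Rightarrow> real^'k::finite"
  assumes D: "mink tm \<xi> \<xi> + a\<^sup>2 > 0" and U: "open U" "u \<in> U" and C: "Ck 2 X U"
    and XU: "X ` U \<subseteq> hyp_slice tm \<xi> a" and inv: "invertible (gram tm X u)" and c: "c \<noteq> 0"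
  shows "mean_curv tm UNIV (\<lambda>v. c *\<^sub>R X v + d) u = (1/c) *\<^sub>R
      (mean_curv tm (hyp_slice tm \<xi> a) X u
       + (real CARD('n) * mink tm \<xi> \<xi> / (mink tm \<xi> \<xi> + a\<^sup>2)) *\<^sub>R X u
       - (real CARD('n) * a / (mink tm \<xi> \<xi> + a\<^sup>2)) *\<^sub>R \<xi>)"
proof -
  have "X u \<in> hyp_slice tm \<xi> a" using XU U(2) by blast
  then show ?thesis
    using mean_curv_UNIV_scaleR_add(2)[OF U C c inv]
      mean_curv_UNIV_hyp_slice[OF D _ inv hyp_slice_immersion_pd[OF U C XU]]
    by simp
qed

section \<open>Rescaled flows\<close>

lemma mcf_imp_interval: "mcf N' tm N M J G \<Longrightarrow> is_interval J \<and> 0 \<in> J"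
  by (simp add: mcf_def)

lemma has_vector_derivative_scaleR_reparametrize:
  assumes "(c has_real_derivative c') (at t within J)" "(\<sigma> has_real_derivative \<sigma>') (at t within J)"
    and "(d has_vector_derivative d') (at t within J)"
    and "(f has_vector_derivative v) (at (\<sigma> t) within I)" "\<sigma> ` J \<subseteq> I"
  shows "((\<lambda>s. c s *\<^sub>R f (\<sigma> s) + d s) has_vector_derivative c t *\<^sub>R (\<sigma>' *\<^sub>R v) + c' *\<^sub>R f (\<sigma> t) + d')
           (at t within J)"
proof -
  have "((\<lambda>s. f (\<sigma> s)) has_vector_derivative \<sigma>' *\<^sub>R v) (at t within J)"
    using vector_diff_chain_within[OF assms(2)[unfolded has_real_derivative_iff_has_vector_derivative]
        has_vector_derivative_within_subset[OF assms(4,5)]]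
    by (simp add: o_def)
  then show ?thesis
    by (intro has_vector_derivative_add has_vector_derivative_scaleR assms(1,3))
qed

lemma mcf_UNIV_of_mcf_hyp_slice:
  fixes f1 :: "real^'k::finite \<Rightarrow> real \<Rightarrow> real^'k" and c \<sigma> c' \<sigma>' :: "real \<Rightarrow> real"
    and d d' :: "real \<Rightarrow> real^'k"
  assumes f1: "mcf TYPE('n::finite) tm (hyp_slice tm \<xi> a) M I1 f1"
    and D: "mink tm \<xi> \<xi> + a\<^sup>2 > 0"
    and J: "is_interval J" "0 \<in> J"
    and init: "c 0 = 1" "\<sigma> 0 = 0" "d 0 = 0"
    and c_nz: "\<And>t. t \<in> J \<Longrightarrow> c t \<noteq> 0" and \<sigma>_I1: "\<And>t. t \<in> J \<Longrightarrow> \<sigma> t \<in> I1"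
    and c': "\<And>t. t \<in> J \<Longrightarrow> (c has_real_derivative c' t) (at t within J)"
    and \<sigma>': "\<And>t. t \<in> J \<Longrightarrow> (\<sigma> has_real_derivative \<sigma>' t) (at t within J)"
    and d': "\<And>t. t \<in> J \<Longrightarrow> (d has_vector_derivative d' t) (at t within J)"
    and ode: "\<And>t. t \<in> J \<Longrightarrow> c t * \<sigma>' t = 1 / c t"
      "\<And>t. t \<in> J \<Longrightarrow> c' t = real CARD('n) * mink tm \<xi> \<xi> / (mink tm \<xi> \<xi> + a\<^sup>2) / c t"
      "\<And>t. t \<in> J \<Longrightarrow> d' t = - (real CARD('n) * a / (mink tm \<xi> \<xi> + a\<^sup>2) / c t) *\<^sub>R \<xi>"
  shows "mcf TYPE('n) tm UNIV M J (\<lambda>x t. c t *\<^sub>R f1 x (\<sigma> t) + d t)"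
proof -
  have "Ck 2 (\<lambda>v. c t *\<^sub>R f1 (\<phi> v) (\<sigma> t) + d t) U \<and>
        (\<forall>u\<in>U. invertible (gram tm (\<lambda>v. c t *\<^sub>R f1 (\<phi> v) (\<sigma> t) + d t) u) \<and>
          ((\<lambda>s. c s *\<^sub>R f1 (\<phi> u) (\<sigma> s) + d s) has_vector_derivative
             mean_curv tm UNIV (\<lambda>v. c t *\<^sub>R f1 (\<phi> v) (\<sigma> t) + d t) u) (at t within J))"
    if chart: "chart M U \<phi>" and t: "t \<in> J" for U and \<phi> :: "real^'n \<Rightarrow> real^'k" and t
  proof (intro conjI ballI)
    define X where "X = (\<lambda>v. f1 (\<phi> v) (\<sigma> t))"
    have "open U" and "\<phi> ` U \<subseteq> M" using chart by (auto simp: chart_def)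
    then have XU: "X ` U \<subseteq> hyp_slice tm \<xi> a"
      using f1 \<sigma>_I1[OF t] by (auto simp: X_def mcf_def)
    have C: "Ck 2 X U" using f1 chart \<sigma>_I1[OF t] by (auto simp: mcf_def X_def)
    then show "Ck 2 (\<lambda>v. c t *\<^sub>R f1 (\<phi> v) (\<sigma> t) + d t) U"
      using Ck_scaleR_add[OF \<open>open U\<close>] by (simp add: X_def)
    fix u assume u: "u \<in> U"
    define H where "H = mean_curv tm (hyp_slice tm \<xi> a) X u"
    have inv: "invertible (gram tm X u)"
      and f1': "((\<lambda>s. f1 (\<phi> u) s) has_vector_derivative H) (at (\<sigma> t) within I1)"
      using f1 chart \<sigma>_I1[OF t] u by (auto simp: mcf_def X_def H_def)
    show "invertible (gram tm (\<lambda>v. c t *\<^sub>R f1 (\<phi> v) (\<sigma> t) + d t) u)"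
      using mean_curv_UNIV_scaleR_add(1)[OF \<open>open U\<close> u C c_nz[OF t] inv] c_nz[OF t] inv
      by (simp add: X_def scalar_invertible)
    have "((\<lambda>s. c s *\<^sub>R f1 (\<phi> u) (\<sigma> s) + d s) has_vector_derivative
        c t *\<^sub>R (\<sigma>' t *\<^sub>R H) + c' t *\<^sub>R X u + d' t) (at t within J)"
      unfolding X_def using \<sigma>_I1
      by (intro has_vector_derivative_scaleR_reparametrize[OF c'[OF t] \<sigma>'[OF t] d'[OF t] f1']) auto
    moreover have "c t *\<^sub>R (\<sigma>' t *\<^sub>R H) + c' t *\<^sub>R X u + d' t
        = (1 / c t) *\<^sub>R (H + (real CARD('n) * mink tm \<xi> \<xi> / (mink tm \<xi> \<xi> + a\<^sup>2)) *\<^sub>R X u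
            - (real CARD('n) * a / (mink tm \<xi> \<xi> + a\<^sup>2)) *\<^sub>R \<xi>)"
      using ode[OF t] by (simp add: scaleR_add_right scaleR_diff_right mult.commute)
    also have "\<dots> = mean_curv tm UNIV (\<lambda>v. c t *\<^sub>R X v + d t) u"
      unfolding H_def by (rule mean_curv_UNIV_scaleR_add_hyp_slice[OF D \<open>open U\<close> u C XU inv c_nz[OF t], symmetric])
    ultimately show "((\<lambda>s. c s *\<^sub>R f1 (\<phi> u) (\<sigma> s) + d s) has_vector_derivative
           mean_curv tm UNIV (\<lambda>v. c t *\<^sub>R f1 (\<phi> v) (\<sigma> t) + d t) u) (at t within J)"
      by (simp add: X_def)
  qed
  moreover have "f1 x 0 = x" if "x \<in> M" for x using f1 that by (simp add: mcf_def)
  ultimately show ?thesis using J by (simp add: mcf_def init)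
qed

lemma is_interval_mono_on_preimage:
  fixes g :: "real \<Rightarrow> real"
  assumes "is_interval S" "is_interval A" "mono_on S g"
  shows "is_interval {t \<in> S. g t \<in> A}"
  using assms unfolding is_interval_1 mono_on_def by (smt (verit) mem_Collect_eq)

lemma is_interval_affine_pos: "is_interval {t::real. 0 < b * t + 1}"
  unfolding is_interval_1
  by (smt (verit, best) mem_Collect_eq mult_left_mono mult_left_mono_neg)

lemma mono_on_ln_affine_div:
  fixes b :: real
  assumes "b \<noteq> 0"
  shows "mono_on {t. 0 < b * t + 1} (\<lambda>t. ln (b * t + 1) / b)"
proof (rule mono_onI)
  fix t t' assume t: "t \<in> {t. 0 < b * t + 1}" and t': "t' \<in> {t. 0 < b * t + 1}" and "t \<le> t'"
  show "ln (b * t + 1) / b \<le> ln (b * t' + 1) / b"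
  proof (cases "b > 0")
    case True
    then have "b * t + 1 \<le> b * t' + 1" using \<open>t \<le> t'\<close> by simp
    then show ?thesis using t t' True by (simp add: divide_right_mono)
  next
    case False
    then have "b * t' + 1 \<le> b * t + 1" using \<open>t \<le> t'\<close> assms by (simp add: mult_left_mono_neg)
    then show ?thesis using t t' False by (simp add: divide_right_mono_neg)
  qed
qed

lemma is_interval_ln_affine_preimage:
  fixes b :: real
  assumes "is_interval I" "is_interval I1" "b \<noteq> 0"
  shows "is_interval {t \<in> I. 0 < b * t + 1 \<and> ln (b * t + 1) / b \<in> I1}"
proof -
  have "is_interval {t \<in> I \<inter> {t. 0 < b * t + 1}. ln (b * t + 1) / b \<in> I1}"
    using assms mono_on_subset[OF mono_on_ln_affine_div[OF assms(3)]]
    by (intro is_interval_mono_on_preimage is_interval_Int is_interval_affine_pos) auto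
  then show ?thesis by (simp add: conj_assoc)
qed

lemma has_real_derivative_sqrt_affine:
  fixes b t :: real
  assumes "0 < b * t + 1"
  shows "((\<lambda>t. sqrt (b * t + 1)) has_real_derivative b / 2 / sqrt (b * t + 1)) (at t)"
proof -
  have "((\<lambda>t. sqrt (b * t + 1)) has_real_derivative inverse (sqrt (b * t + 1)) / 2 * b) (at t)"
    using assms by (intro DERIV_chain2[OF DERIV_real_sqrt]) (auto intro!: derivative_eq_intros)
  then show ?thesis by (rule DERIV_cong) (simp add: field_simps)
qed

lemma has_real_derivative_ln_affine_div:
  fixes b t :: real
  assumes "b \<noteq> 0" "0 < b * t + 1"
  shows "((\<lambda>t. ln (b * t + 1) / b) has_real_derivative 1 / (b * t + 1)) (at t)"
proof -
  have "((\<lambda>t. ln (b * t + 1) / b) has_real_derivative inverse (b * t + 1) * b / b) (at t)"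
    using assms by (intro DERIV_cdivide DERIV_chain2[OF DERIV_ln]) (auto intro!: derivative_eq_intros)
  then show ?thesis by (rule DERIV_cong) (use assms in \<open>simp add: divide_inverse\<close>)
qed

lemma mcf_UNIV_rescaled:
  fixes f1 :: "real^'k::finite \<Rightarrow> real \<Rightarrow> real^'k" and \<kappa> :: real and \<eta> :: "real^'k"
    and I I1 :: "real set"
  defines "n \<equiv> real CARD('n::finite)"
  defines "J \<equiv> {t \<in> I. 0 < 2*n*t*\<kappa> + 1 \<and> ln (2*n*t*\<kappa> + 1) / (2*n*\<kappa>) \<in> I1}"
  assumes f1: "mcf TYPE('n) tm (hyp_slice tm \<xi> a) M I1 f1"
    and D: "mink tm \<xi> \<xi> + a\<^sup>2 > 0"
    and \<kappa>: "\<kappa> = mink tm \<xi> \<xi> / (mink tm \<xi> \<xi> + a\<^sup>2)" "\<kappa> \<noteq> 0"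
    and \<eta>: "\<kappa> *\<^sub>R \<eta> = (a / (mink tm \<xi> \<xi> + a\<^sup>2)) *\<^sub>R \<xi>"
    and I: "is_interval I" "0 \<in> I"
  shows "mcf TYPE('n) tm UNIV M J
    (\<lambda>x t. sqrt (2*n*t*\<kappa> + 1) *\<^sub>R (f1 x (ln (2*n*t*\<kappa> + 1) / (2*n*\<kappa>)) - \<eta>) + \<eta>)"
proof -
  define b where "b = 2 * n * \<kappa>"
  define c where "c t = sqrt (b * t + 1)" for t
  define \<sigma> where "\<sigma> t = ln (b * t + 1) / b" for t
  have b: "b \<noteq> 0" using \<kappa> by (simp add: b_def n_def)
  have q: "2*n*t*\<kappa> + 1 = b * t + 1" for t by (simp add: b_def mult_ac)
  have J: "J = {t \<in> I. 0 < b * t + 1 \<and> \<sigma> t \<in> I1}" by (simp add: J_def q \<sigma>_def b_def)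
  have pos: "0 < b * t + 1" if "t \<in> J" for t using that by (simp add: J)
  have I1: "is_interval I1" "0 \<in> I1" using mcf_imp_interval[OF f1] by auto
  have J_int: "is_interval J"
    unfolding J \<sigma>_def using I(1) I1(1) b by (rule is_interval_ln_affine_preimage)
  have J0: "0 \<in> J" using I I1 by (simp add: J \<sigma>_def)
  have c': "(c has_real_derivative b / 2 / c t) (at t within J)" if "t \<in> J" for t
    unfolding c_def using has_real_derivative_sqrt_affine[OF pos[OF that]]
    by (rule has_field_derivative_at_within)
  have \<sigma>': "(\<sigma> has_real_derivative 1 / (b * t + 1)) (at t within J)" if "t \<in> J" for t
    unfolding \<sigma>_def using has_real_derivative_ln_affine_div[OF b pos[OF that]]
    by (rule has_field_derivative_at_within)
  have d': "((\<lambda>t. \<eta> - c t *\<^sub>R \<eta>) has_vector_derivative - (b / 2 / c t) *\<^sub>R \<eta>) (at t within J)"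
    if "t \<in> J" for t
    using has_vector_derivative_diff[OF has_vector_derivative_const
        has_vector_derivative_scaleR[OF c'[OF that] has_vector_derivative_const]]
    by simp
  have ode1: "c t * (1 / (b * t + 1)) = 1 / c t" if "t \<in> J" for t
    using pos[OF that] real_sqrt_pow2[of "b * t + 1"] by (simp add: c_def field_simps power2_eq_square)
  have "b / 2 = n * mink tm \<xi> \<xi> / (mink tm \<xi> \<xi> + a\<^sup>2)"
    using D by (simp add: b_def \<kappa>(1) field_simps)
  then have ode2: "b / 2 / c t = n * mink tm \<xi> \<xi> / (mink tm \<xi> \<xi> + a\<^sup>2) / c t" for t
    by (simp only:)
  have "(b / 2 / c t) *\<^sub>R \<eta> = (n / c t) *\<^sub>R (\<kappa> *\<^sub>R \<eta>)" for t by (simp add: b_def)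
  then have ode3: "- (b / 2 / c t) *\<^sub>R \<eta> = - (n * a / (mink tm \<xi> \<xi> + a\<^sup>2) / c t) *\<^sub>R \<xi>" for t
    by (simp add: \<eta>)
  have "mcf TYPE('n) tm UNIV M J (\<lambda>x t. c t *\<^sub>R f1 x (\<sigma> t) + (\<eta> - c t *\<^sub>R \<eta>))"
  proof (rule mcf_UNIV_of_mcf_hyp_slice[OF f1 D J_int J0 _ _ _ _ _ c' \<sigma>' d' ode1, folded n_def])
    show "c 0 = 1" "\<sigma> 0 = 0" "\<eta> - c 0 *\<^sub>R \<eta> = 0" by (simp_all add: c_def \<sigma>_def)
    show "c t \<noteq> 0" "\<sigma> t \<in> I1" if "t \<in> J" for t
      using pos[OF that] that by (simp_all add: c_def J)
  qed (assumption | rule ode2 ode3)+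
  then show ?thesis
    unfolding q b_def[symmetric] by (simp add: c_def \<sigma>_def scaleR_diff_right algebra_simps)
qed

lemma mcf_UNIV_translated:
  fixes f1 :: "real^'k::finite \<Rightarrow> real \<Rightarrow> real^'k" and \<mu> :: real and I I1 :: "real set"
  defines "n \<equiv> real CARD('n::finite)"
  assumes f1: "mcf TYPE('n) tm (hyp_slice tm \<xi> a) M I1 f1"
    and D: "mink tm \<xi> \<xi> + a\<^sup>2 > 0" and null: "mink tm \<xi> \<xi> = 0"
    and \<mu>: "\<mu> = a / (mink tm \<xi> \<xi> + a\<^sup>2)"
    and I: "is_interval I" "0 \<in> I"
  shows "mcf TYPE('n) tm UNIV M (I \<inter> I1) (\<lambda>x t. f1 x t - (n * t * \<mu>) *\<^sub>R \<xi>)"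
proof -
  have I1: "is_interval I1" "0 \<in> I1" using mcf_imp_interval[OF f1] by auto
  \<comment> \<open>beta-expanded to the shape of the conclusion of mcf_UNIV_of_mcf_hyp_slice\<close>
  have "mcf TYPE('n) tm UNIV M (I \<inter> I1) (\<lambda>x t. (\<lambda>_. 1) t *\<^sub>R f1 x ((\<lambda>t. t) t) + (\<lambda>t. - (n * t * \<mu>) *\<^sub>R \<xi>) t)"
  proof (rule mcf_UNIV_of_mcf_hyp_slice[OF f1 D, where c' = "\<lambda>_. 0" and \<sigma>' = "\<lambda>_. 1"
      and d' = "\<lambda>_. - (n * \<mu>) *\<^sub>R \<xi>", folded n_def])
    show "is_interval (I \<inter> I1)" using I(1) I1(1) by (rule is_interval_Int)
    fix t assume "t \<in> I \<inter> I1"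
    show "((\<lambda>t. - (n * t * \<mu>) *\<^sub>R \<xi>) has_vector_derivative - (n * \<mu>) *\<^sub>R \<xi>) (at t within I \<inter> I1)"
      by (auto intro!: derivative_eq_intros)
    show "- (n * \<mu>) *\<^sub>R \<xi> = - (n * a / (mink tm \<xi> \<xi> + a\<^sup>2) / 1) *\<^sub>R \<xi>"
      by (simp add: \<mu>)
  qed (use I I1 null in auto)
  then show ?thesis by simp
qed

lemma powr_minus_half_sq: "x > 0 \<Longrightarrow> (x powr (-1/2))\<^sup>2 = 1 / (x::real)"
proof -
  assume "x > 0"
  have "(x powr (-1/2))\<^sup>2 = x powr (-1/2 + -1/2)" unfolding power2_eq_square by (rule powr_add[symmetric])
  also have "\<dots> = 1 / x powr 1" by (simp add: powr_minus_divide)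
  also have "\<dots> = 1 / x" using \<open>x > 0\<close> by simp
  finally show ?thesis .
qed

theorem lemma4p7:
  fixes tm :: "'k::finite"
    and V :: "(real^'k) set" and u \<xi> :: "real^'k"
    and M :: "(real^'k) set"
    and f1 F :: "real^'k \<Rightarrow> real \<Rightarrow> real^'k"
    and I1 I :: "real set"
  defines "a \<equiv> mink tm u \<xi>"
  defines "\<beta> \<equiv> (mink tm \<xi> \<xi> + a\<^sup>2) powr (-1/2)"
  defines "\<alpha> \<equiv> \<beta> * a"
  defines "n \<equiv> real CARD('n::finite)"
  assumes V: "subspace V" "dim V = CARD('k) - 1"
    and L_ne: "Lset tm V u \<noteq> {}"
    and xi_perp: "\<forall>v\<in>V. mink tm \<xi> v = 0" and xi_nz: "\<xi> \<noteq> 0"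
    and a_nonneg: "a \<ge> 0"
    and xi_norm: "mink tm \<xi> \<xi> \<in> {1, -1, 0}"
    and beta_def: "mink tm \<xi> \<xi> + a\<^sup>2 > 0"
    and M: "M \<subseteq> Lset tm V u" "submanifold TYPE('n) M"
    and f1: "mcf TYPE('n) tm (Lset tm V u) M I1 f1"
    and F: "mcf TYPE('n) tm UNIV M I F"
    and F_unique: "\<And>J G. is_interval J \<Longrightarrow> 0 \<in> J \<Longrightarrow> J \<subseteq> I \<Longrightarrow>
                     mcf TYPE('n) tm UNIV M J G \<Longrightarrow> \<forall>x\<in>M. \<forall>t\<in>J. G x t = F x t"
  shows "(\<alpha> \<noteq> 1 \<longrightarrow>
            (\<forall>x\<in>M. \<forall>t\<in>I. 2*n*t*(1 - \<alpha>\<^sup>2) + 1 > 0 \<longrightarrow>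
               ln (2*n*t*(1 - \<alpha>\<^sup>2) + 1) / (2*n*(1 - \<alpha>\<^sup>2)) \<in> I1 \<longrightarrow>
               F x t = sqrt (2*n*t*(1 - \<alpha>\<^sup>2) + 1) *\<^sub>R
                        (f1 x (ln (2*n*t*(1 - \<alpha>\<^sup>2) + 1) / (2*n*(1 - \<alpha>\<^sup>2)))
                          - (\<alpha> * \<beta> / (1 - \<alpha>\<^sup>2)) *\<^sub>R \<xi>)
                      + (\<alpha> * \<beta> / (1 - \<alpha>\<^sup>2)) *\<^sub>R \<xi>))
       \<and> (\<alpha> = 1 \<longrightarrow> (\<forall>x\<in>M. \<forall>t\<in>I. t \<in> I1 \<longrightarrow> F x t = f1 x t - (n * t * \<beta>) *\<^sub>R \<xi>))"
proof -
  note D = beta_def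
  have L: "Lset tm V u = hyp_slice tm \<xi> a"
    unfolding a_def by (rule Lset_eq_hyp_slice[OF V xi_perp xi_nz])
  have \<beta>: "\<beta>\<^sup>2 = 1 / (mink tm \<xi> \<xi> + a\<^sup>2)"
    unfolding \<beta>_def using D by (rule powr_minus_half_sq)
  have \<kappa>: "1 - \<alpha>\<^sup>2 = mink tm \<xi> \<xi> / (mink tm \<xi> \<xi> + a\<^sup>2)"
    using D by (simp add: \<alpha>_def power_mult_distrib \<beta> field_simps)
  have "\<alpha> * \<beta> = \<beta>\<^sup>2 * a" by (simp add: \<alpha>_def power2_eq_square)
  then have \<mu>: "\<alpha> * \<beta> = a / (mink tm \<xi> \<xi> + a\<^sup>2)" by (simp add: \<beta>)
  have I: "is_interval I" "0 \<in> I" using mcf_imp_interval[OF F] by auto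
  note f1' = f1[unfolded L]
  show ?thesis
  proof (cases "\<alpha> = 1")
    case False
    moreover have "\<alpha> \<ge> 0" unfolding \<alpha>_def \<beta>_def using a_nonneg by simp
    ultimately have "1 - \<alpha>\<^sup>2 \<noteq> 0" by (simp add: power2_eq_1_iff)
    then have "(1 - \<alpha>\<^sup>2) *\<^sub>R (\<alpha> * \<beta> / (1 - \<alpha>\<^sup>2)) *\<^sub>R \<xi> = (a / (mink tm \<xi> \<xi> + a\<^sup>2)) *\<^sub>R \<xi>"
      by (simp add: \<mu>)
    note G = mcf_UNIV_rescaled[OF f1' D \<kappa> \<open>1 - \<alpha>\<^sup>2 \<noteq> 0\<close> this I, folded n_def]
    show ?thesis using False F_unique[OF _ _ _ G] mcf_imp_interval[OF G] by auto
  next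
    case True
    then have "mink tm \<xi> \<xi> = 0" using \<kappa> D by simp
    note G = mcf_UNIV_translated[OF f1' D this \<mu> I, folded n_def]
    show ?thesis using True F_unique[OF _ _ _ G] mcf_imp_interval[OF G] by auto
  qed
qed

end
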